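(* Let $\beta^{twfe}:=\mathrm{cov}(\Delta Y,D)/\mathrm{var}(D)$ and $m_\Delta(d):=\mathbb{E}[\Delta Y\mid D=d]$, under random sampling. (1) Under the Continuous Treatment condition, $$\beta^{twfe}=\int_{d_L}^{d_U}\int_{l}^{d_U}w_1^{2\times2}(l,h)\frac{m_\Delta(h)-m_\Delta(l)}{h-l}\,dh\,dl+\int_{d_L}^{d_U}w_0^{2\times2}(h)\frac{m_\Delta(h)-m_\Delta(0)}{h}\,dh,$$ where $w_1^{2\times2}(l,h):=(h-l)^2f_D(h)f_D(l)/\mathrm{var}(D)$ and $w_0^{2\times2}(h):=h^2f_D(h)\,\mathbb{P}(D=0)/\mathrm{var}(D)$; these weights are nonnegative and $\int_{d_L}^{d_U}\int_l^{d_U}w_1^{2\times2}(l,h)\,dh\,dl+\int_{d_L}^{d_U}w_0^{2\times2}(h)\,dh=1$. (Equivalently $w_1^{2\times2}(l,h)=(h-l)^2(f_D(h)+f_D(l))^2\frac{f_D(h)}{f_D(h)+f_D(l)}\frac{f_D(l)}{f_D(h)+f_D(l)}/\mathrm{var}(D)$, and analogously for $w_0^{2\times2}$ with $f_D(l)$ replaced by $\mathbb{P}(D=0)$.) (2) Under the Multi-Valued Treatment condition, $$\beta^{twfe}=\sum_{l\in\mathcal{D}}\sum_{h\in\mathcal{D},\,h>l}w^{2\times2}(l,h)\frac{m_\Delta(h)-m_\Delta(l)}{h-l},$$ where $w^{2\times2}(l,h):=(h-l)^2(p_l+p_h)^2\,p_{l|\{l,h\}}(1-p_{l|\{l,h\}})/\mathrm{var}(D)=(h-l)^2p_lp_h/\mathrm{var}(D)$,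 $p_d:=\mathbb{P}(D=d)$, $p_{l|\{l,h\}}:=\mathbb{P}(D=l\mid D\in\{l,h\})$; the weights are nonnegative and sum to one.
   Context: Two periods $t-1,t$; the data $(Y_t,Y_{t-1},D)$ are i.i.d. across units, $D\ge0$, $\Delta Y:=Y_t-Y_{t-1}$ with finite second moments, $\mathrm{var}(D)>0$. Continuous Treatment condition: support of $D$ is $\{0\}\cup[d_L,d_U]$, $0<d_L<d_U<\infty$, $\mathbb{P}(D=0)>0$, $D$ has a density $f_D>0$ on $[d_L,d_U]$, $m_\Delta$ continuously differentiable on $[d_L,d_U]$. Multi-Valued Treatment condition: support $\mathcal{D}=\{0,d_1,\dots,d_J\}$, $0<d_1<\dots<d_J$, each with positive probability. *)

theory Defs
  imports "HOL-Probability.Probability"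
begin

definition var_rv :: "'a measure \<Rightarrow> ('a \<Rightarrow> real) \<Rightarrow> real" where
  "var_rv M X = (\<integral>x. (X x - (\<integral>y. X y \<partial>M))\<^sup>2 \<partial>M)"

definition cov_rv :: "'a measure \<Rightarrow> ('a \<Rightarrow> real) \<Rightarrow> ('a \<Rightarrow> real) \<Rightarrow> real" where
  "cov_rv M X Z = (\<integral>x. (X x - (\<integral>y. X y \<partial>M)) * (Z x - (\<integral>y. Z y \<partial>M)) \<partial>M)"

definition beta_twfe :: "'a measure \<Rightarrow> ('a \<Rightarrow> real) \<Rightarrow> ('a \<Rightarrow> real) \<Rightarrow> real" where
  "beta_twfe M DY D = cov_rv M DY D / var_rv M D"

text \<open>m is a version of the conditional mean function d \<mapsto> E[DY | D = d]:
  a Borel function with m(D) integrable and E[DY 1{D\<in>A}] = E[m(D) 1{D\<in>A}] for all Borel A.\<close>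

definition is_cond_mean :: "'a measure \<Rightarrow> ('a \<Rightarrow> real) \<Rightarrow> ('a \<Rightarrow> real) \<Rightarrow> (real \<Rightarrow> real) \<Rightarrow> bool" where
  "is_cond_mean M DY D m \<longleftrightarrow>
     m \<in> borel_measurable borel \<and> integrable M (\<lambda>x. m (D x)) \<and>
     (\<forall>A \<in> sets borel. (\<integral>x. indicator A (D x) * DY x \<partial>M) = (\<integral>x. indicator A (D x) * m (D x) \<partial>M))"

end

theory Submission
  imports Defs
begin

text \<open>
  By the defining property of the conditional mean, \<open>cov(\<Delta>Y, D) = E[D m(D)] - E[m(D)] E[D]\<close>,
  and \<open>var(D)\<close> is the same expression with \<open>m\<close> replaced by the identity. For any \<open>g\<close>,
  \<open>E[D g(D)] - E[g(D)] E[D]\<close> is half the expectation of \<open>(D' - D)(g(D') - g(D))\<close> for an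
  independent copy \<open>D'\<close>; since this integrand is symmetric, it equals the sum or integral of
  \<open>(h - l)(g(h) - g(l))\<close> over the pairs \<open>l < h\<close> of support points, weighted by their joint
  probability. Writing \<open>(h - l)(m(h) - m(l))\<close> as \<open>(h - l)\<^sup>2\<close> times the slope and dividing the
  two pair representations by each other expresses \<open>\<beta>\<close> as a weighted average of slopes whose
  weights sum to one. For a mass at \<open>0\<close> plus a density on \<open>[dL, dU]\<close> the pairs \<open>(0, h)\<close>
  give the second integral.
\<close>

lemma integrable_mult_of_square_integrable:
  fixes X Z :: "'a \<Rightarrow> real"
  assumes [measurable]: "X \<in> borel_measurable M" "Z \<in> borel_measurable M"
    and "integrable M (\<lambda>x. (X x)\<^sup>2)" "integrable M (\<lambda>x. (Z x)\<^sup>2)"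
  shows "integrable M (\<lambda>x. X x * Z x)"
proof (rule Bochner_Integration.integrable_bound)
  show "integrable M (\<lambda>x. (X x)\<^sup>2 + (Z x)\<^sup>2)" using assms by simp
  have "\<bar>X x * Z x\<bar> \<le> (X x)\<^sup>2 + (Z x)\<^sup>2" for x
    using sum_squares_bound[of "\<bar>X x\<bar>" "\<bar>Z x\<bar>"] abs_ge_zero[of "X x * Z x"]
    unfolding abs_mult power2_abs by linarith
  then show "AE x in M. norm (X x * Z x) \<le> norm ((X x)\<^sup>2 + (Z x)\<^sup>2)" by simp
qed simp

lemma (in prob_space) cov_rv_eq_integrals:
  fixes X Z :: "'a \<Rightarrow> real"
  assumes "integrable M X" "integrable M Z" "integrable M (\<lambda>x. X x * Z x)"
  shows "cov_rv M X Z = (\<integral>x. X x * Z x \<partial>M) - (\<integral>x. X x \<partial>M) * (\<integral>x. Z x \<partial>M)"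
proof -
  define a where "a = (\<integral>x. X x \<partial>M)"
  define b where "b = (\<integral>x. Z x \<partial>M)"
  have "cov_rv M X Z = (\<integral>x. X x * Z x - b * X x - a * Z x + a * b \<partial>M)"
    unfolding cov_rv_def a_def[symmetric] b_def[symmetric] by (simp add: algebra_simps)
  also have "\<dots> = (\<integral>x. X x * Z x \<partial>M) - b * a - a * b + a * b"
    using assms by (simp add: a_def b_def prob_space)
  finally show ?thesis by (simp add: a_def b_def)
qed

lemma var_rv_eq_cov_rv: "var_rv M X = cov_rv M X X"
  unfolding var_rv_def cov_rv_def by (simp add: power2_eq_square)

lemma (in prob_space) var_rv_eq_integrals:
  fixes D :: "'a \<Rightarrow> real"
  assumes [measurable]: "D \<in> borel_measurable M" and "integrable M (\<lambda>x. (D x)\<^sup>2)"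
  shows "var_rv M D = (\<integral>x. D x * D x \<partial>M) - (\<integral>x. D x \<partial>M) * (\<integral>x. D x \<partial>M)"
  using assms square_integrable_imp_integrable[OF assms]
  by (simp add: var_rv_eq_cov_rv cov_rv_eq_integrals power2_eq_square)

lemma cond_mean_integral_mult:
  fixes D DY :: "'a \<Rightarrow> real" and g :: "real \<Rightarrow> real"
  assumes "finite_measure M" and [measurable]: "DY \<in> borel_measurable M" "D \<in> borel_measurable M"
    "g \<in> borel_measurable borel"
    and int_DY: "integrable M DY" and int_gDY: "integrable M (\<lambda>x. g (D x) * DY x)"
    and cm: "is_cond_mean M DY D m"
  shows "(\<integral>x. g (D x) * m (D x) \<partial>M) = (\<integral>x. g (D x) * DY x \<partial>M)"
proof -
  define F where "F = vimage_algebra (space M) D borel"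
  have sets_F: "sets F = {D -` A \<inter> space M | A. A \<in> sets borel}"
    unfolding F_def by (rule sets_vimage_algebra2) simp
  have "subalgebra M F"
    unfolding subalgebra_def using sets_F by (auto simp: F_def)
  interpret finite_measure M by fact
  interpret finite_measure_subalgebra M F by unfold_locales fact
  have [measurable]: "m \<in> borel_measurable borel" and int_m: "integrable M (\<lambda>x. m (D x))"
    and cm_eq: "\<And>A. A \<in> sets borel \<Longrightarrow>
       (\<integral>x. indicator A (D x) * DY x \<partial>M) = (\<integral>x. indicator A (D x) * m (D x) \<partial>M)"
    using cm unfolding is_cond_mean_def by auto
  have [measurable]: "D \<in> borel_measurable F"
    unfolding F_def by (rule measurable_vimage_algebra1) simp
  have "AE x in M. real_cond_exp M F DY x = m (D x)"
  proof (rule real_cond_exp_charact[OF _ int_DY int_m])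
    fix A assume "A \<in> sets F"
    then obtain B where B: "B \<in> sets borel" "A = D -` B \<inter> space M" using sets_F by auto
    then have "(\<integral>x\<in>A. u x \<partial>M) = (\<integral>x. indicator B (D x) * u x \<partial>M)" for u :: "'a \<Rightarrow> real"
      unfolding set_lebesgue_integral_def
      by (intro Bochner_Integration.integral_cong refl) (auto simp: indicator_def)
    then show "(\<integral>x\<in>A. DY x \<partial>M) = (\<integral>x\<in>A. m (D x) \<partial>M)"
      using cm_eq[OF B(1)] by simp
  qed measurable
  then have "(\<integral>x. g (D x) * m (D x) \<partial>M) = (\<integral>x. g (D x) * real_cond_exp M F DY x \<partial>M)"
    by (intro integral_cong_AE) auto
  also have "\<dots> = (\<integral>x. g (D x) * DY x \<partial>M)"
    by (rule real_cond_exp_intg(2)[OF int_gDY]) measurable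
  finally show ?thesis .
qed

lemma cov_rv_cond_mean:
  fixes D DY :: "'a \<Rightarrow> real"
  assumes "prob_space M" and [measurable]: "DY \<in> borel_measurable M" "D \<in> borel_measurable M"
    and "integrable M (\<lambda>x. (DY x)\<^sup>2)" "integrable M (\<lambda>x. (D x)\<^sup>2)"
    and cm: "is_cond_mean M DY D m"
  shows "cov_rv M DY D = (\<integral>x. D x * m (D x) \<partial>M) - (\<integral>x. m (D x) \<partial>M) * (\<integral>x. D x \<partial>M)"
proof -
  interpret prob_space M by fact
  have int: "integrable M DY" "integrable M D" "integrable M (\<lambda>x. D x * DY x)"
    using assms by (auto intro: square_integrable_imp_integrable integrable_mult_of_square_integrable)
  have "(\<integral>x. DY x \<partial>M) = (\<integral>x. m (D x) \<partial>M)"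
    using cm unfolding is_cond_mean_def by (auto dest!: bspec[where x = UNIV])
  moreover have "(\<integral>x. D x * m (D x) \<partial>M) = (\<integral>x. D x * DY x \<partial>M)"
    by (rule cond_mean_integral_mult[OF finite_measure_axioms]) (use int cm in simp_all)
  moreover have "cov_rv M DY D = (\<integral>x. D x * DY x \<partial>M) - (\<integral>x. DY x \<partial>M) * (\<integral>x. D x \<partial>M)"
    using cov_rv_eq_integrals[of DY D] int by (simp add: mult.commute)
  ultimately show ?thesis by simp
qed

lemma (in prob_space) integral_finite_support:
  fixes D :: "'a \<Rightarrow> real" and g :: "real \<Rightarrow> real"
  assumes [measurable]: "D \<in> borel_measurable M" "g \<in> borel_measurable borel"
    and S: "finite S" "\<P>(x in M. D x \<in> S) = 1"
  shows "(\<integral>x. g (D x) \<partial>M) = (\<Sum>d\<in>S. g d * \<P>(x in M. D x = d))"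
proof -
  have [measurable]: "{x\<in>space M. D x = d} \<in> sets M" for d by measurable
  have "AE x in M. D x \<in> S"
    using AE_prob_1[OF S(2)] by auto
  then have "AE x in M. g (D x) = (\<Sum>d\<in>S. g d * indicator {x\<in>space M. D x = d} x)"
    using AE_space
  proof eventually_elim
    case (elim x)
    then have "(\<Sum>d\<in>S. g d * indicator {x\<in>space M. D x = d} x) = (\<Sum>d\<in>S. if d = D x then g d else 0)"
      by (intro sum.cong) (auto simp: indicator_def)
    with elim S(1) show ?case by simp
  qed
  then have "(\<integral>x. g (D x) \<partial>M) = (\<integral>x. (\<Sum>d\<in>S. g d * indicator {x\<in>space M. D x = d} x) \<partial>M)"
    by (intro integral_cong_AE) auto
  also have "\<dots> = (\<Sum>d\<in>S. g d * \<P>(x in M. D x = d))"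
    by (subst Bochner_Integration.integral_sum) (auto simp: less_top[symmetric])
  finally show ?thesis .
qed

lemma sum_upper_pairs_symmetric:
  fixes F :: "real \<Rightarrow> real \<Rightarrow> real"
  assumes "finite S" and sym: "\<And>l h. F l h = F h l" and diag: "\<And>l. F l l = 0"
  shows "2 * (\<Sum>l\<in>S. \<Sum>h\<in>{h\<in>S. l < h}. F l h) = (\<Sum>l\<in>S. \<Sum>h\<in>S. F l h)"
proof -
  have upper: "(\<Sum>h\<in>{h\<in>S. l < h}. F l h) = (\<Sum>h\<in>S. if l < h then F l h else 0)" for l
    using assms(1) by (simp add: sum.inter_filter)
  have split: "(\<Sum>h\<in>S. F l h) = (\<Sum>h\<in>S. if l < h then F l h else 0) + (\<Sum>h\<in>S. if h < l then F l h else 0)" for l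
    by (subst sum.distrib[symmetric]) (rule sum.cong, auto simp: diag)
  have "(\<Sum>l\<in>S. \<Sum>h\<in>S. if h < l then F l h else 0) = (\<Sum>l\<in>S. \<Sum>h\<in>S. if l < h then F l h else 0)"
    by (subst sum.swap) (intro sum.cong refl, metis sym)
  then show ?thesis
    by (simp add: upper split sum.distrib)
qed

lemma sum_upper_pairs_product_diff:
  fixes g p :: "real \<Rightarrow> real"
  assumes "finite S"
  shows "(\<Sum>l\<in>S. \<Sum>h\<in>{h\<in>S. l < h}. (h - l) * (g h - g l) * p l * p h) =
    (\<Sum>d\<in>S. p d) * (\<Sum>d\<in>S. d * g d * p d) - (\<Sum>d\<in>S. d * p d) * (\<Sum>d\<in>S. g d * p d)"
proof -
  define Q where "Q = (\<Sum>d\<in>S. p d)"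
  define A where "A = (\<Sum>d\<in>S. d * g d * p d)"
  define B where "B = (\<Sum>d\<in>S. d * p d)"
  define C where "C = (\<Sum>d\<in>S. g d * p d)"
  have "(\<Sum>h\<in>S. (h - l) * (g h - g l) * p l * p h) = p l * A - g l * p l * B - l * p l * C + l * g l * p l * Q" for l
    by (simp add: A_def B_def C_def Q_def algebra_simps sum.distrib sum_subtractf sum_distrib_left)
  then have "(\<Sum>l\<in>S. \<Sum>h\<in>S. (h - l) * (g h - g l) * p l * p h) = Q * A - C * B - B * C + A * Q"
    by (simp add: A_def B_def C_def Q_def sum.distrib sum_subtractf sum_distrib_right)
  moreover have "2 * (\<Sum>l\<in>S. \<Sum>h\<in>{h\<in>S. l < h}. (h - l) * (g h - g l) * p l * p h) =
      (\<Sum>l\<in>S. \<Sum>h\<in>S. (h - l) * (g h - g l) * p l * p h)"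
    by (rule sum_upper_pairs_symmetric[OF assms]) (simp_all add: algebra_simps)
  ultimately show ?thesis by (simp add: A_def B_def C_def Q_def algebra_simps)
qed

lemma (in prob_space) moment_cov_finite_support:
  fixes D :: "'a \<Rightarrow> real" and g :: "real \<Rightarrow> real"
  assumes [measurable]: "D \<in> borel_measurable M" "g \<in> borel_measurable borel"
    and S: "finite S" "\<P>(x in M. D x \<in> S) = 1"
  defines "p \<equiv> \<lambda>d. \<P>(x in M. D x = d)"
  shows "(\<integral>x. D x * g (D x) \<partial>M) - (\<integral>x. g (D x) \<partial>M) * (\<integral>x. D x \<partial>M) =
    (\<Sum>l\<in>S. \<Sum>h\<in>{h\<in>S. l < h}. (h - l) * (g h - g l) * p l * p h)"
proof -
  have E: "(\<integral>x. u (D x) \<partial>M) = (\<Sum>d\<in>S. u d * p d)" if "u \<in> borel_measurable borel" for u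
    unfolding p_def by (rule integral_finite_support[OF assms(1) that S])
  have "(\<Sum>d\<in>S. p d) = 1"
    using E[of "\<lambda>_. 1"] by (simp add: prob_space)
  then show ?thesis
    using E[of "\<lambda>d. d * g d"] E[of g] E[of "\<lambda>d. d"]
    by (simp add: sum_upper_pairs_product_diff[OF S(1)] mult.commute[of "\<Sum>d\<in>S. d * p d"])
qed

lemma (in prob_space) cond_prob_doubleton:
  fixes D :: "'a \<Rightarrow> real"
  assumes [measurable]: "D \<in> borel_measurable M" and "l \<noteq> h"
  shows "\<P>(x in M. D x = l \<bar> D x \<in> {l, h}) = \<P>(x in M. D x = l) / (\<P>(x in M. D x = l) + \<P>(x in M. D x = h))"
proof -
  have "{x\<in>space M. D x \<in> {l, h}} = {x\<in>space M. D x = l} \<union> {x\<in>space M. D x = h}" by auto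
  moreover have "prob ({x\<in>space M. D x = l} \<union> {x\<in>space M. D x = h}) = \<P>(x in M. D x = l) + \<P>(x in M. D x = h)"
    using \<open>l \<noteq> h\<close> by (intro finite_measure_Union) auto
  moreover have "{x\<in>space M. D x = l \<and> D x \<in> {l, h}} = {x\<in>space M. D x = l}" by auto
  ultimately show ?thesis unfolding cond_prob_def by simp
qed

lemma lborel_integral_upper_pairs_symmetric:
  fixes G :: "real \<Rightarrow> real \<Rightarrow> real"
  assumes int: "integrable (lborel \<Otimes>\<^sub>M lborel) (\<lambda>(l, h). G l h)"
    and sym: "\<And>l h. G l h = G h l" and diag: "\<And>l. G l l = 0"
  shows "(LBINT l. LBINT h. G l h) = 2 * (LBINT l. LBINT h. if l \<le> h then G l h else 0)"
proof -
  define T where "T l h = (if l \<le> h then G l h else 0)" for l h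
  have [measurable]: "(\<lambda>(l, h). G l h) \<in> borel_measurable (lborel \<Otimes>\<^sub>M lborel)"
    using int by (rule borel_measurable_integrable)
  have int_T: "integrable (lborel \<Otimes>\<^sub>M lborel) (\<lambda>(l, h). T l h)"
    by (rule Bochner_Integration.integrable_bound[OF int]) (auto simp: T_def)
  have int_T_swap: "integrable (lborel \<Otimes>\<^sub>M lborel) (\<lambda>(l, h). T h l)"
    using lborel_pair.integrable_product_swap_iff[of "\<lambda>(l, h). T l h"] int_T by simp
  have T_split: "T l h + T h l = G l h" for l h
    using sym[of l h] diag[of l] by (cases l h rule: linorder_cases) (auto simp: T_def)
  have "(LBINT l. LBINT h. G l h) = (LBINT l. (LBINT h. T l h) + (LBINT h. T h l))"
  proof (rule integral_cong_AE)
    show "AE l in lborel. (LBINT h. G l h) = (LBINT h. T l h) + (LBINT h. T h l)"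
      using lborel_pair.AE_integrable_fst[OF int_T] lborel_pair.AE_integrable_fst[OF int_T_swap]
      by eventually_elim (simp add: T_split flip: Bochner_Integration.integral_add)
  qed (use lborel_pair.integrable_fst[OF int] lborel_pair.integrable_fst[OF int_T]
         lborel_pair.integrable_fst[OF int_T_swap] in \<open>auto dest: borel_measurable_integrable\<close>)
  also have "\<dots> = (LBINT l. LBINT h. T l h) + (LBINT l. LBINT h. T h l)"
    using lborel_pair.integrable_fst[OF int_T] lborel_pair.integrable_fst[OF int_T_swap]
    by (rule Bochner_Integration.integral_add)
  also have "(LBINT l. LBINT h. T h l) = (LBINT l. LBINT h. T l h)"
    using lborel_pair.Fubini_integral[OF int_T] .
  finally show ?thesis by (simp add: T_def)
qed

lemma integrable_lborel_pair_mult: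
  fixes u v :: "real \<Rightarrow> real"
  assumes u: "integrable lborel u" and v: "integrable lborel v"
  shows "integrable (lborel \<Otimes>\<^sub>M lborel) (\<lambda>(x, y). u x * v y)"
proof (rule lborel_pair.Fubini_integrable)
  have [measurable]: "u \<in> borel_measurable borel" "v \<in> borel_measurable borel"
    using u v by (auto dest: borel_measurable_integrable)
  show "(\<lambda>(x, y). u x * v y) \<in> borel_measurable (lborel \<Otimes>\<^sub>M lborel)" by measurable
  show "integrable lborel (\<lambda>x. LBINT y. norm ((\<lambda>(x, y). u x * v y) (x, y)))"
    using u by (simp add: abs_mult integrable_abs)
  show "AE x in lborel. integrable lborel (\<lambda>y. (\<lambda>(x, y). u x * v y) (x, y))"
    using v by simp
qed

lemma lborel_integral_upper_pairs_product_diff: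
  fixes g \<phi> :: "real \<Rightarrow> real"
  assumes "integrable lborel \<phi>" "integrable lborel (\<lambda>x. x * \<phi> x)"
    and "integrable lborel (\<lambda>x. g x * \<phi> x)" "integrable lborel (\<lambda>x. x * g x * \<phi> x)"
  shows "(LBINT l. LBINT h. if l \<le> h then (h - l) * (g h - g l) * \<phi> l * \<phi> h else 0) =
    (LBINT x. \<phi> x) * (LBINT x. x * g x * \<phi> x) - (LBINT x. x * \<phi> x) * (LBINT x. g x * \<phi> x)"
proof -
  define Q where "Q = (LBINT x. \<phi> x)"
  define A where "A = (LBINT x. x * g x * \<phi> x)"
  define B where "B = (LBINT x. x * \<phi> x)"
  define C where "C = (LBINT x. g x * \<phi> x)"
  have expand: "(h - l) * (g h - g l) * \<phi> l * \<phi> h =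
      \<phi> l * (h * g h * \<phi> h) - g l * \<phi> l * (h * \<phi> h) - l * \<phi> l * (g h * \<phi> h) + l * g l * \<phi> l * \<phi> h"
    for l h by (simp add: algebra_simps)
  have "integrable (lborel \<Otimes>\<^sub>M lborel) (\<lambda>(l, h). (h - l) * (g h - g l) * \<phi> l * \<phi> h)"
    unfolding expand split_beta' using assms
    by (intro Bochner_Integration.integrable_add Bochner_Integration.integrable_diff
        integrable_lborel_pair_mult[unfolded split_beta']) auto
  then have "(LBINT l. LBINT h. (h - l) * (g h - g l) * \<phi> l * \<phi> h) =
      2 * (LBINT l. LBINT h. if l \<le> h then (h - l) * (g h - g l) * \<phi> l * \<phi> h else 0)"
    by (rule lborel_integral_upper_pairs_symmetric) (simp_all add: algebra_simps)
  moreover have "(LBINT l. LBINT h. (h - l) * (g h - g l) * \<phi> l * \<phi> h) = 2 * (Q * A - B * C)"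
  proof -
    have "(LBINT h. (h - l) * (g h - g l) * \<phi> l * \<phi> h) = \<phi> l * A - g l * \<phi> l * B - l * \<phi> l * C + l * g l * \<phi> l * Q"
      for l unfolding expand A_def B_def C_def Q_def using assms by simp
    then have "(LBINT l. LBINT h. (h - l) * (g h - g l) * \<phi> l * \<phi> h) =
        (LBINT l. A * \<phi> l - B * (g l * \<phi> l) - C * (l * \<phi> l) + Q * (l * g l * \<phi> l))"
      by (simp add: mult.commute mult.left_commute)
    also have "\<dots> = A * Q - B * C - C * B + Q * A"
      unfolding A_def B_def C_def Q_def using assms by simp
    finally show ?thesis by simp
  qed
  ultimately show ?thesis by (simp add: Q_def A_def B_def C_def)
qed

lemma set_integrable_mult_continuous:
  fixes f g :: "real \<Rightarrow> real"
  assumes [measurable]: "f \<in> borel_measurable borel" "g \<in> borel_measurable borel"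
    and f: "set_integrable lborel {a..b} f" and g: "continuous_on {a..b} g"
  shows "set_integrable lborel {a..b} (\<lambda>x. g x * f x)"
proof -
  obtain K where K: "\<forall>x\<in>{a..b}. \<bar>g x\<bar> \<le> K"
    using compact_imp_bounded[OF compact_continuous_image[OF g compact_Icc]]
    unfolding bounded_iff by auto
  show ?thesis
  proof (rule set_integrable_bound[OF set_integrable_mult_right[OF f, of K]])
    show "set_borel_measurable lborel {a..b} (\<lambda>x. g x * f x)"
      unfolding set_borel_measurable_def by measurable
    have "\<bar>g x\<bar> * \<bar>f x\<bar> \<le> \<bar>K\<bar> * \<bar>f x\<bar>" if "x \<in> {a..b}" for x
      using K that by (intro mult_right_mono) force+
    then show "AE x in lborel. x \<in> {a..b} \<longrightarrow> norm (g x * f x) \<le> norm (K * f x)"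
      by (auto simp: abs_mult)
  qed
qed

lemma set_integral_upper_pairs_product_diff:
  fixes f g :: "real \<Rightarrow> real"
  assumes [measurable]: "f \<in> borel_measurable borel" "g \<in> borel_measurable borel"
    and f: "set_integrable lborel {a..b} f" and g: "continuous_on {a..b} g"
  shows "(LBINT l:{a..b}. LBINT h:{l..b}. (h - l) * (g h - g l) * f h * f l) =
    (LBINT x:{a..b}. f x) * (LBINT x:{a..b}. x * g x * f x) - (LBINT x:{a..b}. x * f x) * (LBINT x:{a..b}. g x * f x)"
proof -
  define \<phi> where "\<phi> x = indicator {a..b} x * f x" for x :: real
  have set_int: "(LBINT x:{a..b}. u x * f x) = (LBINT x. u x * \<phi> x)" for u
    unfolding set_lebesgue_integral_def \<phi>_def by (simp add: mult.left_commute)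
  have integrable: "integrable lborel (\<lambda>x. u x * \<phi> x)"
    if "u \<in> borel_measurable borel" "continuous_on {a..b} u" for u
    using set_integrable_mult_continuous[OF assms(1) that(1) f that(2)]
    unfolding set_integrable_def \<phi>_def by (simp add: mult.left_commute)
  have "(LBINT l:{a..b}. LBINT h:{l..b}. (h - l) * (g h - g l) * f h * f l) =
      (LBINT l. LBINT h. if l \<le> h then (h - l) * (g h - g l) * \<phi> l * \<phi> h else 0)"
    unfolding set_lebesgue_integral_def
  proof (intro Bochner_Integration.integral_cong refl)
    fix l :: real
    show "indicator {a..b} l *\<^sub>R (LBINT h. indicator {l..b} h *\<^sub>R ((h - l) * (g h - g l) * f h * f l)) =
        (LBINT h. if l \<le> h then (h - l) * (g h - g l) * \<phi> l * \<phi> h else 0)"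
    proof (cases "l \<in> {a..b}")
      case True
      then show ?thesis
        by (simp, intro Bochner_Integration.integral_cong) (auto simp: \<phi>_def indicator_def)
    next
      case False
      then have "\<phi> l = 0" by (simp add: \<phi>_def)
      with False show ?thesis by (simp cong: if_cong)
    qed
  qed
  also have "\<dots> = (LBINT x. \<phi> x) * (LBINT x. x * g x * \<phi> x) - (LBINT x. x * \<phi> x) * (LBINT x. g x * \<phi> x)"
    using g integrable[of "\<lambda>_. 1"]
    by (intro lborel_integral_upper_pairs_product_diff integrable) (auto intro: continuous_intros)
  finally show ?thesis
    using set_int[of "\<lambda>_. 1"] set_int[of "\<lambda>x. x"] set_int[of g] set_int[of "\<lambda>x. x * g x"] by simp
qed

lemma (in prob_space) density_distr_restrict_eq:
  fixes D :: "'a \<Rightarrow> real" and f :: "real \<Rightarrow> real"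
  assumes [measurable]: "D \<in> borel_measurable M" "f \<in> borel_measurable borel"
    and "0 < a" and f: "set_integrable lborel {a..b} f" and f_nonneg: "\<forall>x\<in>{a..b}. f x \<ge> 0"
    and distr_D: "\<forall>A \<in> sets borel. \<P>(x in M. D x \<in> A) =
           \<P>(x in M. D x = 0) * indicator A 0 + (LBINT x:(A \<inter> {a..b}). f x)"
  shows "density (distr M borel D) (indicator {a..b}) = density lborel (\<lambda>y. ennreal (indicator {a..b} y * f y))"
proof (rule measure_eqI)
  fix A assume "A \<in> sets (density (distr M borel D) (indicator {a..b}))"
  then have [measurable]: "A \<in> sets borel" by simp
  have "emeasure (density (distr M borel D) (indicator {a..b})) A = emeasure (distr M borel D) ({a..b} \<inter> A)"
    by (rule emeasure_restricted) simp_all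
  also have "\<dots> = ennreal (\<P>(x in M. D x \<in> {a..b} \<inter> A))"
    by (simp add: emeasure_distr emeasure_eq_measure vimage_def Collect_conj_eq Int_commute)
  also have "\<dots> = ennreal (LBINT x:(A \<inter> {a..b}). f x)"
    using bspec[OF distr_D, of "{a..b} \<inter> A"] \<open>0 < a\<close> by (simp add: Int_commute Int_left_commute)
  also have "\<dots> = (\<integral>\<^sup>+y. ennreal (indicator (A \<inter> {a..b}) y *\<^sub>R f y) \<partial>lborel)"
    unfolding set_lebesgue_integral_def
    using set_integrable_subset[OF f, of "A \<inter> {a..b}"] f_nonneg
    by (intro nn_integral_eq_integral[symmetric]) (auto simp: set_integrable_def indicator_def)
  also have "\<dots> = emeasure (density lborel (\<lambda>y. ennreal (indicator {a..b} y * f y))) A"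
    by (subst emeasure_density) (auto intro!: nn_integral_cong simp: indicator_def)
  finally show "emeasure (density (distr M borel D) (indicator {a..b})) A =
      emeasure (density lborel (\<lambda>y. ennreal (indicator {a..b} y * f y))) A" .
qed simp

lemma (in prob_space) integral_mixed_distribution:
  fixes D :: "'a \<Rightarrow> real" and f g :: "real \<Rightarrow> real"
  assumes [measurable]: "D \<in> borel_measurable M" "f \<in> borel_measurable borel" "g \<in> borel_measurable borel"
    and "0 < a" and f: "set_integrable lborel {a..b} f" and f_nonneg: "\<forall>x\<in>{a..b}. f x \<ge> 0"
    and distr_D: "\<forall>A \<in> sets borel. \<P>(x in M. D x \<in> A) =
           \<P>(x in M. D x = 0) * indicator A 0 + (LBINT x:(A \<inter> {a..b}). f x)"
    and g: "continuous_on {a..b} g"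
  shows "(\<integral>x. g (D x) \<partial>M) = \<P>(x in M. D x = 0) * g 0 + (LBINT x:{a..b}. g x * f x)"
proof -
  define I where "I = {a..b}"
  have [measurable]: "I \<in> sets borel" "{x\<in>space M. D x = 0} \<in> sets M" by (auto simp: I_def)
  have "0 \<notin> I" using \<open>0 < a\<close> by (simp add: I_def)
  moreover have "({0} \<union> I) \<inter> {a..b} = {a..b}" by (auto simp: I_def)
  ultimately have "\<P>(x in M. D x \<in> {0} \<union> I) = \<P>(x in M. D x \<in> UNIV)"
    using bspec[OF distr_D, of "{0} \<union> I"] bspec[OF distr_D, of UNIV] by simp
  then have "AE x in M. D x \<in> {0} \<union> I"
    using AE_prob_1[of "{x\<in>space M. D x \<in> {0} \<union> I}"] by (auto simp: prob_space)
  then have "AE x in M. g (D x) = g 0 * indicator {x\<in>space M. D x = 0} x + indicator I (D x) * g (D x)"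
    using AE_space by eventually_elim (use \<open>0 \<notin> I\<close> in \<open>auto simp: indicator_def\<close>)
  moreover have "integrable M (\<lambda>x. indicator I (D x) * g (D x))"
  proof -
    obtain K where K: "\<forall>x\<in>{a..b}. \<bar>g x\<bar> \<le> K"
      using compact_imp_bounded[OF compact_continuous_image[OF g compact_Icc]]
      unfolding bounded_iff by auto
    have bound: "norm (indicator I (D x) * g (D x)) \<le> norm K" for x
    proof (cases "D x \<in> I")
      case True
      then have "\<bar>g (D x)\<bar> \<le> K" using K by (simp add: I_def)
      with True show ?thesis by simp
    qed simp
    show ?thesis
      by (rule Bochner_Integration.integrable_bound[where f = "\<lambda>_. K", OF _ _ AE_I2[OF bound]]) simp_all
  qed
  ultimately have "(\<integral>x. g (D x) \<partial>M) = g 0 * \<P>(x in M. D x = 0) + (\<integral>x. indicator I (D x) * g (D x) \<partial>M)"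
    by (subst integral_cong_AE[of _ _ "\<lambda>x. g 0 * indicator {x\<in>space M. D x = 0} x + indicator I (D x) * g (D x)"])
      (auto simp: less_top[symmetric])
  also have "(\<integral>x. indicator I (D x) * g (D x) \<partial>M) = (\<integral>y. indicator I y * g y \<partial>distr M borel D)"
    by (simp add: integral_distr)
  also have "\<dots> = (\<integral>y. g y \<partial>density (distr M borel D) (\<lambda>y. ennreal (indicator I y)))"
    by (subst integral_density) (simp_all add: I_def)
  also have "\<dots> = (\<integral>y. (indicator I y * f y) *\<^sub>R g y \<partial>lborel)"
    unfolding ennreal_indicator I_def density_distr_restrict_eq[OF assms(1,2) \<open>0 < a\<close> f f_nonneg distr_D]
    using f_nonneg by (intro integral_density) (auto simp: indicator_def)
  also have "\<dots> = (LBINT x:{a..b}. g x * f x)"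
    by (simp add: set_lebesgue_integral_def I_def mult_ac)
  finally show ?thesis by (simp add: mult.commute)
qed

lemma (in prob_space) moment_cov_mixed_distribution:
  fixes D :: "'a \<Rightarrow> real" and f g :: "real \<Rightarrow> real"
  assumes [measurable]: "D \<in> borel_measurable M" "f \<in> borel_measurable borel" "g \<in> borel_measurable borel"
    and "0 < a" and f: "set_integrable lborel {a..b} f" and f_nonneg: "\<forall>x\<in>{a..b}. f x \<ge> 0"
    and distr_D: "\<forall>A \<in> sets borel. \<P>(x in M. D x \<in> A) =
           \<P>(x in M. D x = 0) * indicator A 0 + (LBINT x:(A \<inter> {a..b}). f x)"
    and g: "continuous_on {a..b} g"
  defines "p0 \<equiv> \<P>(x in M. D x = 0)"
  shows "(\<integral>x. D x * g (D x) \<partial>M) - (\<integral>x. g (D x) \<partial>M) * (\<integral>x. D x \<partial>M) =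
    (LBINT l:{a..b}. LBINT h:{l..b}. (h - l) * (g h - g l) * f h * f l) + p0 * (LBINT h:{a..b}. h * (g h - g 0) * f h)"
proof -
  have E: "(\<integral>x. u (D x) \<partial>M) = p0 * u 0 + (LBINT x:{a..b}. u x * f x)"
    if "u \<in> borel_measurable borel" "continuous_on {a..b} u" for u
    unfolding p0_def by (rule integral_mixed_distribution[OF assms(1,2) that(1) \<open>0 < a\<close> f f_nonneg distr_D that(2)])
  define Q where "Q = (LBINT x:{a..b}. f x)"
  define A where "A = (LBINT x:{a..b}. x * g x * f x)"
  define B where "B = (LBINT x:{a..b}. x * f x)"
  define C where "C = (LBINT x:{a..b}. g x * f x)"
  have "Q = 1 - p0"
    using E[of "\<lambda>_. 1"] by (simp add: prob_space Q_def)
  moreover have "(\<integral>x. D x * g (D x) \<partial>M) = A" "(\<integral>x. g (D x) \<partial>M) = p0 * g 0 + C" "(\<integral>x. D x \<partial>M) = B"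
    using E[of "\<lambda>x. x * g x"] E[OF _ g] E[of "\<lambda>x. x"] g
    by (simp_all add: A_def B_def C_def continuous_intros)
  moreover have "(LBINT l:{a..b}. LBINT h:{l..b}. (h - l) * (g h - g l) * f h * f l) = Q * A - B * C"
    unfolding Q_def A_def B_def C_def by (rule set_integral_upper_pairs_product_diff[OF assms(2,3) f g])
  moreover have "(LBINT h:{a..b}. h * (g h - g 0) * f h) = (LBINT h:{a..b}. h * g h * f h - g 0 * (h * f h))"
    by (simp add: algebra_simps)
  moreover have "\<dots> = A - g 0 * B"
    using set_integrable_mult_continuous[OF assms(2) _ f, of "\<lambda>x. x * g x"]
      set_integrable_mult_continuous[OF assms(2) _ f, of "\<lambda>x. x"] g
    unfolding A_def B_def by (simp add: set_integral_diff continuous_intros)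
  ultimately show ?thesis
    by (simp only:) (simp add: algebra_simps)
qed

lemma mult_shares_of_sum:
  fixes a b c :: "'a :: field"
  assumes "a + b \<noteq> 0"
  shows "c * (a + b)\<^sup>2 * (a / (a + b)) * (b / (a + b)) = c * a * b"
  using assms by (simp add: power2_eq_square)

theorem twfe_decomposition_multivalued:
  fixes M :: "'a measure" and DY D :: "'a \<Rightarrow> real" and m :: "real \<Rightarrow> real"
  assumes "prob_space M"
    and [measurable]: "DY \<in> borel_measurable M" "D \<in> borel_measurable M"
    and "integrable M (\<lambda>x. (DY x)\<^sup>2)" "integrable M (\<lambda>x. (D x)\<^sup>2)"
    and V_pos: "var_rv M D > 0"
    and cm: "is_cond_mean M DY D m"
    and S: "finite S" "\<forall>d\<in>S. \<P>(x in M. D x = d) > 0" "\<P>(x in M. D x \<in> S) = 1"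
  defines "p \<equiv> \<lambda>d. \<P>(x in M. D x = d)"
    and "w \<equiv> \<lambda>l h. (h - l)\<^sup>2 * (\<P>(x in M. D x = l) + \<P>(x in M. D x = h))\<^sup>2 *
                  \<P>(x in M. D x = l \<bar> D x \<in> {l, h}) * (1 - \<P>(x in M. D x = l \<bar> D x \<in> {l, h}))
                  / var_rv M D"
  shows "beta_twfe M DY D = (\<Sum>l\<in>S. \<Sum>h\<in>{h\<in>S. h > l}. w l h * ((m h - m l) / (h - l)))"
    and "\<forall>l\<in>S. \<forall>h\<in>{h\<in>S. h > l}. w l h = (h - l)\<^sup>2 * p l * p h / var_rv M D"
    and "\<forall>l\<in>S. \<forall>h\<in>{h\<in>S. h > l}. w l h \<ge> 0"
    and "(\<Sum>l\<in>S. \<Sum>h\<in>{h\<in>S. h > l}. w l h) = 1"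
proof -
  interpret prob_space M by fact
  define V where "V = var_rv M D"
  have [measurable]: "m \<in> borel_measurable borel"
    using cm by (simp add: is_cond_mean_def)
  have cov: "cov_rv M DY D = (\<Sum>l\<in>S. \<Sum>h\<in>{h\<in>S. l < h}. (h - l) * (m h - m l) * p l * p h)"
    using cov_rv_cond_mean[OF assms(1-5) cm] moment_cov_finite_support[OF assms(3) _ S(1,3), of m]
    by (simp add: p_def)
  have var: "V = (\<Sum>l\<in>S. \<Sum>h\<in>{h\<in>S. l < h}. (h - l) * (h - l) * p l * p h)"
    using var_rv_eq_integrals[OF assms(3,5)] moment_cov_finite_support[OF assms(3) _ S(1,3), of "\<lambda>x. x"]
    by (simp add: p_def V_def)
  have w_eq: "w l h = (h - l)\<^sup>2 * p l * p h / V" if "l \<in> S" "h \<in> S" "l < h" for l h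
  proof -
    have "p l + p h \<noteq> 0" using S(2) that by (metis add_pos_pos less_irrefl p_def)
    then have "(h - l)\<^sup>2 * (p l + p h)\<^sup>2 * (p l / (p l + p h)) * (1 - p l / (p l + p h)) = (h - l)\<^sup>2 * p l * p h"
      using mult_shares_of_sum[of "p l" "p h" "(h - l)\<^sup>2"] by (simp add: diff_divide_eq_iff)
    then show ?thesis
      using cond_prob_doubleton[OF assms(3), of l h] that by (simp add: w_def V_def p_def)
  qed
  show "\<forall>l\<in>S. \<forall>h\<in>{h\<in>S. h > l}. w l h = (h - l)\<^sup>2 * p l * p h / var_rv M D"
    using w_eq by (simp add: V_def)
  show "\<forall>l\<in>S. \<forall>h\<in>{h\<in>S. h > l}. w l h \<ge> 0"
    using w_eq S(2) V_pos by (simp add: p_def V_def less_imp_le)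
  show "beta_twfe M DY D = (\<Sum>l\<in>S. \<Sum>h\<in>{h\<in>S. h > l}. w l h * ((m h - m l) / (h - l)))"
    unfolding beta_twfe_def cov V_def[symmetric] sum_divide_distrib
    by (intro sum.cong refl) (auto simp: w_eq power2_eq_square)
  show "(\<Sum>l\<in>S. \<Sum>h\<in>{h\<in>S. h > l}. w l h) = 1"
  proof -
    have "(\<Sum>l\<in>S. \<Sum>h\<in>{h\<in>S. h > l}. w l h) = (\<Sum>l\<in>S. \<Sum>h\<in>{h\<in>S. l < h}. (h - l) * (h - l) * p l * p h) / V"
      unfolding sum_divide_distrib by (intro sum.cong refl) (auto simp: w_eq power2_eq_square)
    then show ?thesis
      using V_pos by (simp add: var[symmetric] V_def)
  qed
qed

theorem twfe_decomposition_continuous: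
  fixes M :: "'a measure" and DY D :: "'a \<Rightarrow> real" and m f :: "real \<Rightarrow> real"
  assumes "prob_space M"
    and [measurable]: "DY \<in> borel_measurable M" "D \<in> borel_measurable M"
    and "integrable M (\<lambda>x. (DY x)\<^sup>2)" "integrable M (\<lambda>x. (D x)\<^sup>2)"
    and V_pos: "var_rv M D > 0"
    and cm: "is_cond_mean M DY D m"
    and "0 < dL" and p0_pos: "\<P>(x in M. D x = 0) > 0"
    and [measurable]: "f \<in> borel_measurable borel"
    and f: "set_integrable lborel {dL..dU} f" and f_pos: "\<forall>x\<in>{dL..dU}. f x > 0"
    and distr_D: "\<forall>A \<in> sets borel. \<P>(x in M. D x \<in> A) =
           \<P>(x in M. D x = 0) * indicator A 0 + (LBINT x:(A \<inter> {dL..dU}). f x)"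
    and m_cont: "continuous_on {dL..dU} m"
  defines "p0 \<equiv> \<P>(x in M. D x = 0)"
    and "w1 \<equiv> \<lambda>l h. (h - l)\<^sup>2 * f h * f l / var_rv M D"
    and "w0 \<equiv> \<lambda>h. h\<^sup>2 * f h * \<P>(x in M. D x = 0) / var_rv M D"
  shows "beta_twfe M DY D =
            (LBINT l:{dL..dU}. LBINT h:{l..dU}. w1 l h * ((m h - m l) / (h - l)))
          + (LBINT h:{dL..dU}. w0 h * ((m h - m 0) / h))"
    and "\<forall>l\<in>{dL..dU}. \<forall>h\<in>{l..dU}. w1 l h \<ge> 0"
    and "\<forall>h\<in>{dL..dU}. w0 h \<ge> 0"
    and "(LBINT l:{dL..dU}. LBINT h:{l..dU}. w1 l h) + (LBINT h:{dL..dU}. w0 h) = 1"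
    and "\<forall>l\<in>{dL..dU}. \<forall>h\<in>{dL..dU}. w1 l h =
           (h - l)\<^sup>2 * (f h + f l)\<^sup>2 * (f h / (f h + f l)) * (f l / (f h + f l)) / var_rv M D"
    and "\<forall>h\<in>{dL..dU}. w0 h =
           h\<^sup>2 * (f h + p0)\<^sup>2 * (f h / (f h + p0)) * (p0 / (f h + p0)) / var_rv M D"
proof -
  interpret prob_space M by fact
  define V where "V = var_rv M D"
  have [measurable]: "m \<in> borel_measurable borel"
    using cm by (simp add: is_cond_mean_def)
  note moment_cov = moment_cov_mixed_distribution[OF assms(3) _ _ \<open>0 < dL\<close> f _ distr_D]
  have f_nonneg: "\<forall>x\<in>{dL..dU}. f x \<ge> 0"
    using f_pos by (simp add: less_imp_le)
  have cov: "cov_rv M DY D = (LBINT l:{dL..dU}. LBINT h:{l..dU}. (h - l) * (m h - m l) * f h * f l)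
      + p0 * (LBINT h:{dL..dU}. h * (m h - m 0) * f h)"
    using cov_rv_cond_mean[OF assms(1-5) cm] moment_cov[of m] f_nonneg m_cont
    by (simp add: p0_def)
  have var: "V = (LBINT l:{dL..dU}. LBINT h:{l..dU}. (h - l) * (h - l) * f h * f l)
      + p0 * (LBINT h:{dL..dU}. h * (h - 0) * f h)"
    unfolding V_def var_rv_eq_integrals[OF assms(3,5)] p0_def
    by (rule moment_cov) (use f_nonneg in \<open>simp_all add: continuous_on_id\<close>)
  (* Also valid for h = l and h = 0: there x / 0 = 0 makes both sides vanish. *)
  have w1_slope: "w1 l h * ((m h - m l) / (h - l)) = (h - l) * (m h - m l) * f h * f l / V" for l h
    by (cases "h = l") (simp_all add: w1_def V_def power2_eq_square)
  have w0_slope: "w0 h * ((m h - m 0) / h) = p0 * (h * (m h - m 0) * f h) / V" for h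
    by (cases "h = 0") (simp_all add: w0_def p0_def V_def power2_eq_square)
  have w1_eq: "w1 l h = (h - l) * (h - l) * f h * f l / V" for l h
    by (simp add: w1_def V_def power2_eq_square)
  have w0_eq: "w0 h = p0 * (h * (h - 0) * f h) / V" for h
    by (simp add: w0_def p0_def V_def power2_eq_square mult_ac)
  show "beta_twfe M DY D =
            (LBINT l:{dL..dU}. LBINT h:{l..dU}. w1 l h * ((m h - m l) / (h - l)))
          + (LBINT h:{dL..dU}. w0 h * ((m h - m 0) / h))"
    unfolding beta_twfe_def cov V_def[symmetric] w1_slope w0_slope
    by (simp add: add_divide_distrib)
  have "(LBINT l:{dL..dU}. LBINT h:{l..dU}. w1 l h) + (LBINT h:{dL..dU}. w0 h) = V / V"
    by (simp only: w1_eq w0_eq set_integral_divide_zero set_integral_mult_right add_divide_distrib var)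
  then show "(LBINT l:{dL..dU}. LBINT h:{l..dU}. w1 l h) + (LBINT h:{dL..dU}. w0 h) = 1"
    using V_pos by (simp add: V_def)
  show "\<forall>l\<in>{dL..dU}. \<forall>h\<in>{l..dU}. w1 l h \<ge> 0"
    using f_nonneg V_pos by (auto simp: w1_def)
  show "\<forall>h\<in>{dL..dU}. w0 h \<ge> 0"
    using f_nonneg V_pos p0_pos by (auto simp: w0_def)
  show "\<forall>l\<in>{dL..dU}. \<forall>h\<in>{dL..dU}. w1 l h =
      (h - l)\<^sup>2 * (f h + f l)\<^sup>2 * (f h / (f h + f l)) * (f l / (f h + f l)) / var_rv M D"
  proof (intro ballI)
    fix l h assume "l \<in> {dL..dU}" "h \<in> {dL..dU}"
    then have "f h + f l \<noteq> 0" using f_pos by (metis add_pos_pos less_irrefl)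
    then show "w1 l h = (h - l)\<^sup>2 * (f h + f l)\<^sup>2 * (f h / (f h + f l)) * (f l / (f h + f l)) / var_rv M D"
      by (subst mult_shares_of_sum) (simp_all add: w1_def)
  qed
  show "\<forall>h\<in>{dL..dU}. w0 h =
      h\<^sup>2 * (f h + p0)\<^sup>2 * (f h / (f h + p0)) * (p0 / (f h + p0)) / var_rv M D"
  proof (intro ballI)
    fix h assume "h \<in> {dL..dU}"
    then have "f h + p0 \<noteq> 0" using f_pos p0_pos by (metis add_pos_pos less_irrefl p0_def)
    then show "w0 h = h\<^sup>2 * (f h + p0)\<^sup>2 * (f h / (f h + p0)) * (p0 / (f h + p0)) / var_rv M D"
      by (subst mult_shares_of_sum) (simp_all add: w0_def p0_def)
  qed
qed

theorem proposition8:
  fixes M :: "'a measure" and DY D :: "'a \<Rightarrow> real" and m :: "real \<Rightarrow> real"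
  assumes "prob_space M"
    and "DY \<in> borel_measurable M" and "D \<in> borel_measurable M"
    and "integrable M (\<lambda>x. (DY x)\<^sup>2)" and "integrable M (\<lambda>x. (D x)\<^sup>2)"
    and "AE x in M. D x \<ge> 0"
    and "var_rv M D > 0"
    and "is_cond_mean M DY D m"
  shows
  "(\<forall>dL dU (f :: real \<Rightarrow> real).
      (0 < dL \<and> dL < dU \<and> \<P>(x in M. D x = 0) > 0 \<and>
       f \<in> borel_measurable borel \<and> set_integrable lborel {dL..dU} f \<and>
       (\<forall>x\<in>{dL..dU}. f x > 0) \<and>
       (\<forall>A \<in> sets borel. \<P>(x in M. D x \<in> A) =
           \<P>(x in M. D x = 0) * indicator A 0 + (LBINT x:(A \<inter> {dL..dU}). f x)) \<and>
       (\<exists>m'. continuous_on {dL..dU} m' \<and>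
          (\<forall>x\<in>{dL..dU}. (m has_real_derivative m' x) (at x within {dL..dU}))))
    \<longrightarrow>
      (let p0 = \<P>(x in M. D x = 0);
           w1 = (\<lambda>l h. (h - l)\<^sup>2 * f h * f l / var_rv M D);
           w0 = (\<lambda>h. h\<^sup>2 * f h * p0 / var_rv M D)
       in beta_twfe M DY D =
            (LBINT l:{dL..dU}. LBINT h:{l..dU}. w1 l h * ((m h - m l) / (h - l)))
          + (LBINT h:{dL..dU}. w0 h * ((m h - m 0) / h))
        \<and> (\<forall>l\<in>{dL..dU}. \<forall>h\<in>{l..dU}. w1 l h \<ge> 0)
        \<and> (\<forall>h\<in>{dL..dU}. w0 h \<ge> 0)
        \<and> (LBINT l:{dL..dU}. LBINT h:{l..dU}. w1 l h) + (LBINT h:{dL..dU}. w0 h) = 1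
        \<and> (\<forall>l\<in>{dL..dU}. \<forall>h\<in>{dL..dU}. w1 l h =
              (h - l)\<^sup>2 * (f h + f l)\<^sup>2 * (f h / (f h + f l)) * (f l / (f h + f l)) / var_rv M D)
        \<and> (\<forall>h\<in>{dL..dU}. w0 h =
              h\<^sup>2 * (f h + p0)\<^sup>2 * (f h / (f h + p0)) * (p0 / (f h + p0)) / var_rv M D)))
  \<and>
   (\<forall>S :: real set.
      (finite S \<and> 0 \<in> S \<and> (\<forall>d\<in>S. d \<ge> 0) \<and>
       (\<forall>d\<in>S. \<P>(x in M. D x = d) > 0) \<and> \<P>(x in M. D x \<in> S) = 1)
    \<longrightarrow>
      (let p = (\<lambda>d. \<P>(x in M. D x = d));
           w = (\<lambda>l h. (h - l)\<^sup>2 * (p l + p h)\<^sup>2 *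
                  \<P>(x in M. D x = l \<bar> D x \<in> {l, h}) * (1 - \<P>(x in M. D x = l \<bar> D x \<in> {l, h}))
                  / var_rv M D)
       in beta_twfe M DY D =
            (\<Sum>l\<in>S. \<Sum>h\<in>{h\<in>S. h > l}. w l h * ((m h - m l) / (h - l)))
        \<and> (\<forall>l\<in>S. \<forall>h\<in>{h\<in>S. h > l}. w l h = (h - l)\<^sup>2 * p l * p h / var_rv M D)
        \<and> (\<forall>l\<in>S. \<forall>h\<in>{h\<in>S. h > l}. w l h \<ge> 0)
        \<and> (\<Sum>l\<in>S. \<Sum>h\<in>{h\<in>S. h > l}. w l h) = 1))"
proof (intro conjI allI impI, goal_cases)
  case (1 dL dU f)
  then have "continuous_on {dL..dU} m"
    by (blast intro: DERIV_continuous_on)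
  with 1 show ?case
    unfolding Let_def by (elim conjE) (intro conjI twfe_decomposition_continuous[OF assms(1-5,7,8)]; assumption)
next
  case (2 S)
  then show ?case
    unfolding Let_def by (elim conjE) (intro conjI twfe_decomposition_multivalued[OF assms(1-5,7,8)]; assumption)
qed

end
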